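(* For every sequence $(k_n)_{n\ge 2}$ with $k_n\in\{2,\dots,n\}$ and $k_n\to\infty$, there exist probability distributions $P,Q$ on $\mathbb{R}$ (not depending on $n$), each absolutely continuous with respect to the other, such that the optimal risk $R(T^* )$ in the weighted hidden clique problem with parameters $n,k_n,P,Q$ satisfies $R(T^* )\to 0$ as $n\to\infty$.
   Context: Weighted hidden clique model. For $n\ge 2$ and $k\in\{2,\dots,n\}$, let $E=\{(i,j):1\le i<j\le n\}$ and for $S\subseteq[n]$ let $E(S)=\{(i,j):i,j\in S,\ i<j\}$. The observation is $\mathbf{X}=(X_e)_{e\in E}$. Under $\mathcal{H}_0$ (law $\mathbb{P}_0$) the $X_e$ are i.i.d. $P$. Under $\mathcal{H}_1$ (law $\mathbb{P}_1$) a uniformly random $k$-subset $S^*\subseteq[n]$ is chosen and, conditionally on $S^*$, the $X_e$ are independent with $X_e\sim Q$ for $e\in E(S^* )$ and $X_e\sim P$ otherwise. The risk of a test $T:\mathbb{R}^{\binom n2}\to\{0,1\}$ is $R(T)=\mathbb{P}_0(T=1)+\mathbb{P}_1(T=0)$, and $R(T^* )=\inf_T R(T)$ is the optimal risk. *)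

theory Defs
  imports "HOL-Probability.Probability"
begin

definition hc_edges :: "nat \<Rightarrow> (nat \<times> nat) set" where
  "hc_edges n = {(i, j). 1 \<le> i \<and> i < j \<and> j \<le> n}"

definition hc_clique_edges :: "nat set \<Rightarrow> (nat \<times> nat) set" where
  "hc_clique_edges S = {(i, j). i \<in> S \<and> j \<in> S \<and> i < j}"

definition hc_space :: "nat \<Rightarrow> ((nat \<times> nat) \<Rightarrow> real) measure" where
  "hc_space n = PiM (hc_edges n) (\<lambda>_. borel)"

definition hc_null :: "nat \<Rightarrow> real measure \<Rightarrow> ((nat \<times> nat) \<Rightarrow> real) measure" where
  "hc_null n P = PiM (hc_edges n) (\<lambda>_. P)"

definition hc_planted :: "nat \<Rightarrow> real measure \<Rightarrow> real measure \<Rightarrow> nat set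
    \<Rightarrow> ((nat \<times> nat) \<Rightarrow> real) measure" where
  "hc_planted n P Q S = PiM (hc_edges n) (\<lambda>e. if e \<in> hc_clique_edges S then Q else P)"

definition hc_subsets :: "nat \<Rightarrow> nat \<Rightarrow> nat set set" where
  "hc_subsets n k = {S. S \<subseteq> {1..n} \<and> card S = k}"

definition hc_alt_prob :: "nat \<Rightarrow> nat \<Rightarrow> real measure \<Rightarrow> real measure
    \<Rightarrow> ((nat \<times> nat) \<Rightarrow> real) set \<Rightarrow> real" where
  "hc_alt_prob n k P Q A =
     (\<Sum>S\<in>hc_subsets n k. measure (hc_planted n P Q S) A) / real (card (hc_subsets n k))"

definition hc_risk :: "nat \<Rightarrow> nat \<Rightarrow> real measure \<Rightarrow> real measure
    \<Rightarrow> (((nat \<times> nat) \<Rightarrow> real) \<Rightarrow> bool) \<Rightarrow> real" where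
  "hc_risk n k P Q T =
     measure (hc_null n P) {x \<in> space (hc_space n). T x}
     + hc_alt_prob n k P Q {x \<in> space (hc_space n). \<not> T x}"

definition hc_optimal_risk :: "nat \<Rightarrow> nat \<Rightarrow> real measure \<Rightarrow> real measure \<Rightarrow> real" where
  "hc_optimal_risk n k P Q =
     (INF T \<in> {T. T \<in> measurable (hc_space n) (count_space UNIV)}. hc_risk n k P Q T)"

end

theory Submission
  imports Defs "HOL-Real_Asymp.Real_Asymp"
begin

(* Take for P the geometric law Geom(1/2) on the naturals, and for Q the law of a relabelling of a
   Geom(1/2) variable that keeps every natural number as an atom, so that P and Q are mutually
   absolutely continuous, yet puts mass at least 1/(4 sqrt k_n) on [n, oo) for every n. The test
   "some edge weight is at least n" errs under H0 with probability at most n^2 2^-n (union bound)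
   and under H1 with probability at most (1 - 1/(4 sqrt k_n))^(k_n - 1) <= exp (- sqrt k_n / 8),
   since the k_n - 1 clique edges at the least planted vertex are independent with law Q. *)

lemma prod_le_prod_subset:
  fixes f :: "'a \<Rightarrow> 'b :: linordered_idom"
  assumes "finite B" "A \<subseteq> B" "\<And>x. x \<in> B \<Longrightarrow> 0 \<le> f x \<and> f x \<le> 1"
  shows "prod f B \<le> prod f A"
proof -
  have "prod f B = prod f (B - A) * prod f A"
    using prod.subset_diff[OF assms(2,1)] .
  also have "\<dots> \<le> 1 * prod f A"
    using assms by (intro mult_right_mono prod_le_1 prod_nonneg) auto
  finally show ?thesis by simp
qed

lemma one_minus_power_le_exp:
  fixes c :: real
  assumes "c \<le> 1"
  shows "(1 - c) ^ m \<le> exp (- (c * m))"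
proof -
  have "(1 - c) ^ m \<le> exp (- c) ^ m"
    using assms exp_ge_add_one_self[of "- c"] by (intro power_mono) auto
  then show ?thesis
    by (simp add: exp_of_nat_mult[symmetric] mult.commute)
qed

lemma finite_hc_edges: "finite (hc_edges n)"
  by (rule finite_subset[of _ "{1..n} \<times> {1..n}"]) (auto simp: hc_edges_def)

lemma card_hc_edges_le: "card (hc_edges n) \<le> n * n"
proof -
  have "card (hc_edges n) \<le> card ({1..n} \<times> {1..n})"
    by (rule card_mono) (auto simp: hc_edges_def)
  then show ?thesis
    by simp
qed

lemma hc_clique_edges_subset: "S \<subseteq> {1..n} \<Longrightarrow> hc_clique_edges S \<subseteq> hc_edges n"
  by (auto simp: hc_clique_edges_def hc_edges_def)

lemma card_hc_clique_edges_ge: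
  assumes "finite S"
  shows "card S - 1 \<le> card (hc_clique_edges S)"
proof (cases "S = {}")
  case False
  define s where "s = Min S"
  have "s \<in> S" "\<And>t. t \<in> S - {s} \<Longrightarrow> s < t"
    using assms False Min_le[OF assms] by (auto simp: s_def less_le)
  then have star: "Pair s ` (S - {s}) \<subseteq> hc_clique_edges S"
    by (auto simp: hc_clique_edges_def)
  have "finite (hc_clique_edges S)"
    by (rule finite_subset[of _ "S \<times> S"]) (auto simp: hc_clique_edges_def assms)
  then have "card (Pair s ` (S - {s})) \<le> card (hc_clique_edges S)"
    using star by (rule card_mono)
  then show ?thesis
    using \<open>s \<in> S\<close> assms by (simp add: card_image inj_on_def)
qed simp

definition hc_threshold_test :: "nat \<Rightarrow> ((nat \<times> nat) \<Rightarrow> real) \<Rightarrow> bool" where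
  "hc_threshold_test n x \<longleftrightarrow> (\<exists>e\<in>hc_edges n. real n \<le> x e)"

lemma hc_threshold_test_accept:
  "{x \<in> space (hc_space n). \<not> hc_threshold_test n x} = PiE (hc_edges n) (\<lambda>_. {..<real n})"
  by (auto simp: hc_space_def space_PiM hc_threshold_test_def PiE_def Pi_def not_le)

lemma sets_hc_threshold_test_accept:
  "{x \<in> space (hc_space n). \<not> hc_threshold_test n x} \<in> sets (hc_space n)"
  unfolding hc_threshold_test_accept unfolding hc_space_def
  by (rule sets_PiM_I_finite) (auto simp: finite_hc_edges)

lemma hc_threshold_test_measurable:
  "hc_threshold_test n \<in> measurable (hc_space n) (count_space UNIV)"
proof -
  have "{x \<in> space (hc_space n). hc_threshold_test n x}
      = space (hc_space n) - {x \<in> space (hc_space n). \<not> hc_threshold_test n x}"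
    by auto
  then have "{x \<in> space (hc_space n). hc_threshold_test n x} \<in> sets (hc_space n)"
    using sets_hc_threshold_test_accept by auto
  then show ?thesis
    by (simp add: pred_def)
qed

lemma measure_hc_threshold_test_accept:
  assumes "\<And>e. prob_space (M e)" "\<And>e. sets (M e) = sets borel"
  shows "measure (PiM (hc_edges n) M) {x \<in> space (hc_space n). \<not> hc_threshold_test n x}
       = (\<Prod>e\<in>hc_edges n. measure (M e) {..<real n})"
proof -
  interpret finite_product_prob_space M "hc_edges n"
    unfolding finite_product_prob_space_def finite_product_sigma_finite_def
      finite_product_sigma_finite_axioms_def product_prob_space_def product_prob_space_axioms_def
      product_sigma_finite_def
    using assms by (simp add: prob_space_imp_sigma_finite finite_hc_edges)
  show ?thesis
    unfolding hc_threshold_test_accept using assms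
    by (intro finite_measure_PiM_emb) auto
qed

lemma measure_hc_null_threshold_test:
  assumes "prob_space P" "sets P = sets borel"
  shows "measure (hc_null n P) {x \<in> space (hc_space n). hc_threshold_test n x}
       = 1 - measure P {..<real n} ^ card (hc_edges n)"
proof -
  interpret prob_space "hc_null n P"
    unfolding hc_null_def using assms by (intro prob_space_PiM)
  have sets_eq: "sets (hc_null n P) = sets (hc_space n)"
    unfolding hc_null_def hc_space_def using assms(2) by (intro sets_PiM_cong) auto
  let ?accept = "{x \<in> space (hc_space n). \<not> hc_threshold_test n x}"
  have "{x \<in> space (hc_space n). hc_threshold_test n x} = space (hc_null n P) - ?accept"
    using sets_eq_imp_space_eq[OF sets_eq] by auto
  then have "measure (hc_null n P) {x \<in> space (hc_space n). hc_threshold_test n x}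
      = 1 - measure (hc_null n P) ?accept"
    using prob_compl sets_hc_threshold_test_accept sets_eq by simp
  also have "measure (hc_null n P) ?accept = measure P {..<real n} ^ card (hc_edges n)"
    unfolding hc_null_def using assms by (subst measure_hc_threshold_test_accept) auto
  finally show ?thesis .
qed

lemma measure_hc_planted_threshold_test_accept_le:
  assumes "prob_space P" "sets P = sets borel" "prob_space Q" "sets Q = sets borel"
    and "S \<subseteq> {1..n}" "card S = K"
  shows "measure (hc_planted n P Q S) {x \<in> space (hc_space n). \<not> hc_threshold_test n x}
       \<le> measure Q {..<real n} ^ (K - 1)"
proof -
  let ?M = "\<lambda>e. if e \<in> hc_clique_edges S then Q else P"
  let ?f = "\<lambda>e. measure (?M e) {..<real n}"
  have le_1: "0 \<le> ?f e \<and> ?f e \<le> 1" for e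
    using assms by (simp add: prob_space.prob_le_1)
  have "finite S"
    using assms(5) finite_subset by blast
  have "measure (hc_planted n P Q S) {x \<in> space (hc_space n). \<not> hc_threshold_test n x}
      = (\<Prod>e\<in>hc_edges n. ?f e)"
    unfolding hc_planted_def using assms by (intro measure_hc_threshold_test_accept) auto
  also have "\<dots> \<le> (\<Prod>e\<in>hc_clique_edges S. ?f e)"
    using le_1 hc_clique_edges_subset[OF assms(5)]
    by (intro prod_le_prod_subset finite_hc_edges)
  also have "\<dots> = measure Q {..<real n} ^ card (hc_clique_edges S)"
    by simp
  also have "\<dots> \<le> measure Q {..<real n} ^ (K - 1)"
    using assms(3) card_hc_clique_edges_ge[OF \<open>finite S\<close>] assms(6)
    by (intro power_decreasing) (auto simp: prob_space.prob_le_1)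
  finally show ?thesis .
qed

lemma hc_alt_prob_le:
  assumes "\<And>S. S \<in> hc_subsets n K \<Longrightarrow> measure (hc_planted n P Q S) A \<le> B" "0 \<le> B"
  shows "hc_alt_prob n K P Q A \<le> B"
proof -
  have "(\<Sum>S\<in>hc_subsets n K. measure (hc_planted n P Q S) A) \<le> real (card (hc_subsets n K)) * B"
    using assms(1) by (intro sum_bounded_above) auto
  then show ?thesis
    unfolding hc_alt_prob_def using assms(2)
    by (cases "card (hc_subsets n K) = 0") (auto simp: divide_le_eq mult.commute)
qed

lemma hc_risk_nonneg: "0 \<le> hc_risk n K P Q T"
  unfolding hc_risk_def hc_alt_prob_def by (intro add_nonneg_nonneg divide_nonneg_nonneg sum_nonneg) auto

lemma hc_optimal_risk_nonneg: "0 \<le> hc_optimal_risk n K P Q"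
  unfolding hc_optimal_risk_def
  using hc_threshold_test_measurable by (intro cINF_greatest hc_risk_nonneg) auto

lemma hc_optimal_risk_le_risk:
  "T \<in> measurable (hc_space n) (count_space UNIV) \<Longrightarrow> hc_optimal_risk n K P Q \<le> hc_risk n K P Q T"
  unfolding hc_optimal_risk_def by (rule cINF_lower) (auto intro!: bdd_belowI2 hc_risk_nonneg)

lemma hc_optimal_risk_le_threshold:
  assumes "prob_space P" "sets P = sets borel" "prob_space Q" "sets Q = sets borel"
  shows "hc_optimal_risk n K P Q
       \<le> (1 - measure P {..<real n} ^ card (hc_edges n)) + measure Q {..<real n} ^ (K - 1)"
proof -
  have "hc_alt_prob n K P Q {x \<in> space (hc_space n). \<not> hc_threshold_test n x}
      \<le> measure Q {..<real n} ^ (K - 1)"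
    using assms measure_hc_planted_threshold_test_accept_le
    by (intro hc_alt_prob_le) (auto simp: hc_subsets_def)
  then show ?thesis
    using hc_optimal_risk_le_risk[OF hc_threshold_test_measurable, of n K P Q]
    unfolding hc_risk_def measure_hc_null_threshold_test[OF assms(1,2)] by linarith
qed

definition geometric_law :: "(nat \<Rightarrow> nat) \<Rightarrow> real measure" where
  "geometric_law f = distr (measure_pmf (geometric_pmf (1/2))) borel (\<lambda>j. real (f j))"

lemma prob_space_geometric_law: "prob_space (geometric_law f)"
  unfolding geometric_law_def by (rule measure_pmf.prob_space_distr) simp

lemma sets_geometric_law: "sets (geometric_law f) = sets borel"
  unfolding geometric_law_def by simp

lemma null_sets_distr_measure_pmf:
  "A \<in> null_sets (distr (measure_pmf p) borel f) \<longleftrightarrow> A \<in> sets borel \<and> f ` set_pmf p \<inter> A = {}"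
proof -
  have "A \<in> null_sets (distr (measure_pmf p) borel f)
      \<longleftrightarrow> f -` A \<in> null_sets (measure_pmf p) \<and> A \<in> sets borel"
    using null_sets_distr_iff[of f "measure_pmf p" borel A] by simp
  also have "f -` A \<in> null_sets (measure_pmf p) \<longleftrightarrow> measure (measure_pmf p) (f -` A) = 0"
    by (simp add: measure_pmf.emeasure_eq_measure null_sets_def)
  finally show ?thesis
    by (auto simp: measure_pmf_zero_iff)
qed

lemma absolutely_continuous_geometric_law:
  assumes "range g \<subseteq> range f"
  shows "absolutely_continuous (geometric_law f) (geometric_law g)"
proof -
  have "range (\<lambda>j. real (g j)) \<subseteq> range (\<lambda>j. real (f j))"
    using assms by auto
  then show ?thesis
    unfolding absolutely_continuous_def geometric_law_def
    by (auto simp: null_sets_distr_measure_pmf set_pmf_geometric) blast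
qed

lemma measure_geometric_law_lessThan:
  "measure (geometric_law f) {..<real n} = measure_pmf.prob (geometric_pmf (1/2)) {j. f j < n}"
  unfolding geometric_law_def by (subst measure_distr) (auto simp: vimage_def)

lemma measure_geometric_law_id_lessThan:
  "measure (geometric_law (\<lambda>j. j)) {..<real n} = 1 - (1/2) ^ n"
proof -
  have "(\<Sum>j<n. (1/2::real) ^ Suc j) = 1 - (1/2) ^ n"
    by (induction n) simp_all
  moreover have "{j. j < n} = {..<n}"
    by auto
  ultimately show ?thesis
    by (simp add: measure_geometric_law_lessThan measure_measure_pmf_finite)
qed

lemma measure_geometric_law_lessThan_le:
  assumes "n \<le> f j"
  shows "measure (geometric_law f) {..<real n} \<le> 1 - (1/2) ^ Suc j"
proof -
  have "measure_pmf.prob (geometric_pmf (1/2)) {j. f j < n}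
      \<le> measure_pmf.prob (geometric_pmf (1/2)) (UNIV - {j})"
    using assms by (intro measure_pmf.finite_measure_mono) auto
  also have "\<dots> = 1 - (1/2) ^ Suc j"
    using measure_pmf.prob_compl[of "{j}" "geometric_pmf (1/2)"] by (simp add: measure_pmf_single)
  finally show ?thesis
    by (simp add: measure_geometric_law_lessThan)
qed

definition last_below :: "(nat \<Rightarrow> nat) \<Rightarrow> nat \<Rightarrow> nat" where
  "last_below k b = Max {m. k m < b}"

lemma le_last_below:
  assumes "filterlim k at_top sequentially" "k n < b"
  shows "n \<le> last_below k b"
proof -
  obtain N where "\<And>m. m \<ge> N \<Longrightarrow> b \<le> k m"
    using assms(1) by (auto simp: filterlim_at_top eventually_sequentially)
  then have "{m. k m < b} \<subseteq> {..<N}"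
    by (auto simp: not_le[symmetric])
  then have "finite {m. k m < b}"
    by (rule finite_subset) simp
  then show ?thesis
    unfolding last_below_def using assms(2) by (simp add: Max_ge)
qed

text \<open>A relabelling of the atoms of \<open>Geom(1/2)\<close>: the even atoms cover every natural number,
  so the relabelled law is equivalent to \<open>Geom(1/2)\<close>; the odd atom \<open>2h+1\<close>, of mass \<open>4^-(h+1)\<close>,
  is sent beyond every \<open>n\<close> with \<open>k n < 16^(h+1)\<close>.\<close>
definition spike_label :: "(nat \<Rightarrow> nat) \<Rightarrow> nat \<Rightarrow> nat" where
  "spike_label k j = (if even j then j div 2 else last_below k (16 ^ Suc (j div 2)))"

lemma surj_spike_label: "surj (spike_label k)"
  by (rule surjI[of _ "\<lambda>m. 2 * m"]) (simp add: spike_label_def)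

lemma sqrt_div_8_le:
  fixes K y :: real
  assumes "2 \<le> K" "0 < y" "y \<le> sqrt K"
  shows "sqrt K / 8 \<le> (K - 1) / (4 * y)"
proof -
  have "y * sqrt K \<le> sqrt K * sqrt K"
    using assms by (intro mult_right_mono) auto
  also have "\<dots> = K"
    using assms by simp
  finally have "sqrt K * y \<le> 2 * (K - 1)"
    using assms(1) by (simp add: mult.commute)
  then show ?thesis
    using assms(2) by (simp add: field_simps)
qed

lemma spike_label_accept_power_le:
  assumes k: "filterlim k at_top sequentially" and K: "2 \<le> k n"
  shows "measure (geometric_law (spike_label k)) {..<real n} ^ (k n - 1)
       \<le> exp (- sqrt (real (k n)) / 8)"
proof -
  obtain h where h: "16 ^ h \<le> k n" "k n < 16 ^ Suc h"
    using ex_power_ivl1[of 16 "k n"] K by auto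
  define c :: real where "c = (1/2) ^ Suc (Suc (2 * h))"
  have "n \<le> spike_label k (Suc (2 * h))"
    using le_last_below[OF k h(2)] by (simp add: spike_label_def)
  then have accept_le: "measure (geometric_law (spike_label k)) {..<real n} \<le> 1 - c"
    unfolding c_def by (rule measure_geometric_law_lessThan_le)
  have c_eq: "c = 1 / (4 * 4 ^ h)"
    by (simp add: c_def power_mult power_one_over)
  have "(4 ^ h)\<^sup>2 = (16::real) ^ h"
    by (simp add: power2_eq_square power_mult_distrib[symmetric])
  then have "(4 ^ h)\<^sup>2 \<le> real (k n)"
    using h(1) by (metis of_nat_le_iff of_nat_numeral of_nat_power)
  then have "sqrt (real (k n)) / 8 \<le> (real (k n) - 1) / (4 * 4 ^ h)"
    using K by (intro sqrt_div_8_le) (auto intro: real_le_rsqrt)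
  then have exponent_le: "sqrt (real (k n)) / 8 \<le> c * real (k n - 1)"
    using K by (simp add: c_eq of_nat_diff)
  have "measure (geometric_law (spike_label k)) {..<real n} ^ (k n - 1) \<le> (1 - c) ^ (k n - 1)"
    using accept_le by (intro power_mono) auto
  also have "\<dots> \<le> exp (- (c * real (k n - 1)))"
    unfolding c_def by (rule one_minus_power_le_exp, rule power_le_one) auto
  also have "\<dots> \<le> exp (- sqrt (real (k n)) / 8)"
    using exponent_le by simp
  finally show ?thesis .
qed

lemma hc_optimal_risk_spike_le:
  assumes "filterlim k at_top sequentially" "2 \<le> k n"
  shows "hc_optimal_risk n (k n) (geometric_law (\<lambda>j. j)) (geometric_law (spike_label k))
       \<le> real n * real n * (1/2) ^ n + exp (- sqrt (real (k n)) / 8)"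
proof -
  have "1 - real (card (hc_edges n)) * (1/2) ^ n \<le> (1 - (1/2::real) ^ n) ^ card (hc_edges n)"
    using Bernoulli_inequality[of "- ((1/2::real) ^ n)" "card (hc_edges n)"] by (simp add: power_le_one)
  then have "1 - (1 - (1/2) ^ n) ^ card (hc_edges n) \<le> real (card (hc_edges n)) * (1/2::real) ^ n"
    by linarith
  also have "\<dots> \<le> real n * real n * (1/2) ^ n"
    using card_hc_edges_le[of n] by (intro mult_right_mono) (auto simp flip: of_nat_mult)
  finally have null_le: "1 - (1 - (1/2) ^ n) ^ card (hc_edges n) \<le> real n * real n * (1/2::real) ^ n" .
  have "hc_optimal_risk n (k n) (geometric_law (\<lambda>j. j)) (geometric_law (spike_label k))
      \<le> (1 - measure (geometric_law (\<lambda>j. j)) {..<real n} ^ card (hc_edges n))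
        + measure (geometric_law (spike_label k)) {..<real n} ^ (k n - 1)"
    by (intro hc_optimal_risk_le_threshold prob_space_geometric_law sets_geometric_law)
  then show ?thesis
    using null_le spike_label_accept_power_le[OF assms]
    unfolding measure_geometric_law_id_lessThan by linarith
qed

theorem mainTheorem3:
  fixes k :: "nat \<Rightarrow> nat"
  assumes "\<forall>n\<ge>2. 2 \<le> k n \<and> k n \<le> n"
    and "filterlim k at_top sequentially"
  shows "\<exists>P Q :: real measure.
           prob_space P \<and> prob_space Q \<and>
           sets P = sets borel \<and> sets Q = sets borel \<and>
           absolutely_continuous P Q \<and> absolutely_continuous Q P \<and>
           (\<lambda>n. hc_optimal_risk n (k n) P Q) \<longlonglongrightarrow> 0"
proof (intro exI conjI)
  let ?P = "geometric_law (\<lambda>j. j)" and ?Q = "geometric_law (spike_label k)"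
  show "prob_space ?P" "prob_space ?Q" "sets ?P = sets borel" "sets ?Q = sets borel"
    by (rule prob_space_geometric_law sets_geometric_law)+
  show "absolutely_continuous ?P ?Q" "absolutely_continuous ?Q ?P"
    using surj_spike_label[of k] by (auto intro: absolutely_continuous_geometric_law)
  have null_lim: "(\<lambda>n. real n * real n * (1/2) ^ n) \<longlonglongrightarrow> 0"
    by real_asymp
  have "((\<lambda>x. exp (- sqrt x / 8)) \<longlongrightarrow> 0) at_top"
    by real_asymp
  then have alt_lim: "(\<lambda>n. exp (- sqrt (real (k n)) / 8)) \<longlonglongrightarrow> 0"
    using filterlim_compose[OF _ filterlim_compose[OF filterlim_real_sequentially assms(2)]]
    by blast
  show "(\<lambda>n. hc_optimal_risk n (k n) ?P ?Q) \<longlonglongrightarrow> 0"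
  proof (rule tendsto_sandwich[OF _ _ tendsto_const tendsto_add_zero[OF null_lim alt_lim]])
    show "eventually (\<lambda>n. 0 \<le> hc_optimal_risk n (k n) ?P ?Q) sequentially"
      by (simp add: hc_optimal_risk_nonneg)
    show "eventually (\<lambda>n. hc_optimal_risk n (k n) ?P ?Q
        \<le> real n * real n * (1/2) ^ n + exp (- sqrt (real (k n)) / 8)) sequentially"
      using assms hc_optimal_risk_spike_le unfolding eventually_sequentially by blast
  qed
qed

end
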